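(* Let $p(x)=a_mx^m+\cdots+a_0$ be a polynomial with complex coefficients that is not identically zero, and let $\epsilon>0$. Then the function $f(x)=p(x)e^{-|x|^{1+\epsilon}}$ has linearly independent time-frequency translates, i.e. $\mathcal G(f,\mathbb{R}^2)$ is linearly independent.
   Context: For $a,b\in\mathbb{R}$, $M_aT_bf(x)=e^{2\pi i a x}f(x-b)$, and $\mathcal G(f,\mathbb{R}^2)=\{M_aT_bf:a,b\in\mathbb{R}\}$. Measurable functions equal a.e. are identified; $\mathcal G(f,\mathbb{R}^2)$ is linearly independent if every finite linear combination $\sum c_{(a,b)}M_aT_bf$ over distinct pairs $(a,b)$ with coefficients not all zero is not zero almost everywhere. *)

theory Defs
  imports "HOL-Analysis.Analysis" "HOL-Computational_Algebra.Polynomial"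
begin

definition MT :: "real \<Rightarrow> real \<Rightarrow> (real \<Rightarrow> complex) \<Rightarrow> real \<Rightarrow> complex" where
  "MT a b f x = exp (2 * pi * \<i> * complex_of_real (a * x)) * f (x - b)"

text \<open>Linear independence of G(f,R^2), with functions identified up to
  Lebesgue-a.e. equality: every finite linear combination over distinct pairs
  that vanishes a.e. has all coefficients zero.\<close>
definition gabor_lin_indep :: "(real \<Rightarrow> complex) \<Rightarrow> bool" where
  "gabor_lin_indep f \<longleftrightarrow>
     (\<forall>S :: (real \<times> real) set. \<forall>c :: real \<times> real \<Rightarrow> complex.
        finite S \<longrightarrow>
        (AE x in lborel. (\<Sum>(a,b)\<in>S. c (a,b) * MT a b f x) = 0) \<longrightarrow>
        (\<forall>ab\<in>S. c ab = 0))"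

end

theory Submission
  imports Defs "HOL-Real_Asymp.Real_Asymp" "HOL-Computational_Algebra.Fundamental_Theorem_Algebra"
begin

text \<open>A combination \<open>\<Sum> c(a,b) e\<^sup>2\<^sup>\<pi>\<^sup>i\<^sup>a\<^sup>x f(x - b)\<close> vanishing almost everywhere vanishes
  everywhere, since \<open>f\<close> is continuous. We may assume all coefficients are nonzero; let \<open>b\<close> be
  the largest shift. Dividing by \<open>f(x - b)\<close>, every term with a smaller shift \<open>b'\<close> carries the
  factor \<open>f(x - b') / f(x - b)\<close>, which tends to \<open>0\<close> as \<open>x \<rightarrow> \<infinity>\<close> because
  \<open>exp(-|x|\<^sup>1\<^sup>+\<^sup>\<epsilon>)\<close> decays faster than any exponential while the polynomial factor grows only
  polynomially. Hence the trigonometric polynomial \<open>\<Sum>\<^sub>a c(a,b) e\<^sup>2\<^sup>\<pi>\<^sup>i\<^sup>a\<^sup>x\<close> tends to \<open>0\<close>,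
  which forces its coefficients to vanish, a contradiction.\<close>

definition exp_freq :: "real \<Rightarrow> real \<Rightarrow> complex" where
  "exp_freq a x = exp (2 * pi * \<i> * complex_of_real (a * x))"

lemma MT_eq_exp_freq: "MT a b f x = exp_freq a x * f (x - b)"
  by (simp add: MT_def exp_freq_def)

lemma norm_exp_freq [simp]: "norm (exp_freq a x) = 1"
  by (simp add: exp_freq_def)

lemma exp_freq_add: "exp_freq a (x + h) = exp_freq a x * exp_freq a h"
  by (simp add: exp_freq_def distrib_left exp_add[symmetric] algebra_simps)

lemma continuous_on_exp_freq [continuous_intros]: "continuous_on S (exp_freq a)"
  unfolding exp_freq_def by (intro continuous_intros)

lemma exp_freq_neq:
  assumes "0 < \<bar>(a - b) * h\<bar>" and "\<bar>(a - b) * h\<bar> < 1"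
  shows "exp_freq a h \<noteq> exp_freq b h"
proof
  assume "exp_freq a h = exp_freq b h"
  then have "exp (2 * pi * \<i> * complex_of_real ((a - b) * h)) = 1"
    by (simp add: exp_freq_def algebra_simps exp_diff)
  then obtain n :: int where "2 * pi * ((a - b) * h) = of_int (2 * n) * pi"
    by (auto simp: exp_eq_1)
  then have "(a - b) * h = of_int n" by simp
  then have "0 < \<bar>n\<bar>" and "\<bar>n\<bar> < 1"
    using assms by (simp_all flip: of_int_abs)
  then show False by linarith
qed

text \<open>Shifting the variable by a small \<open>h\<close> multiplies the term of frequency \<open>a\<close> by \<open>exp_freq a h\<close>;
  subtracting \<open>exp_freq a\<^sub>0 h\<close> times the original sum eliminates the frequency \<open>a\<^sub>0\<close> and keeps
  the others, since these factors are distinct for \<open>h\<close> small.\<close>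
lemma trig_poly_tendsto_0_imp_coeffs_0:
  assumes "finite A" and "((\<lambda>x. \<Sum>a\<in>A. c a * exp_freq a x) \<longlongrightarrow> 0) at_top"
  shows "\<forall>a\<in>A. c a = 0"
  using assms
proof (induction A arbitrary: c rule: finite_induct)
  case empty
  then show ?case by simp
next
  case (insert a0 A)
  define S where "S = (\<Sum>a\<in>A. \<bar>a - a0\<bar>)"
  define h where "h = 1 / (1 + S)"
  have "S \<ge> 0" unfolding S_def by (simp add: sum_nonneg)
  then have "h > 0" by (simp add: h_def)
  have separated: "exp_freq a h \<noteq> exp_freq a0 h" if "a \<in> A" for a
  proof (rule exp_freq_neq)
    show "0 < \<bar>(a - a0) * h\<bar>" using that insert.hyps \<open>h > 0\<close> by auto
    have "\<bar>a - a0\<bar> \<le> S"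
      unfolding S_def using member_le_sum[of a A "\<lambda>a. \<bar>a - a0\<bar>"] insert.hyps that by auto
    then have "\<bar>a - a0\<bar> * h \<le> S * h" using \<open>h > 0\<close> by simp
    also have "\<dots> < 1" using \<open>S \<ge> 0\<close> by (simp add: h_def)
    finally show "\<bar>(a - a0) * h\<bar> < 1" using \<open>h > 0\<close> by (simp add: abs_mult)
  qed
  define g where "g = (\<lambda>x. \<Sum>a\<in>insert a0 A. c a * exp_freq a x)"
  have g: "(g \<longlongrightarrow> 0) at_top" using insert.prems by (simp add: g_def)
  have "filterlim (\<lambda>x::real. x + h) at_top at_top" by real_asymp
  with g have "((\<lambda>x. g (x + h) - exp_freq a0 h * g x) \<longlongrightarrow> 0) at_top"
    by (auto intro!: tendsto_eq_intros filterlim_compose[OF g])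
  moreover have "g (x + h) - exp_freq a0 h * g x =
      (\<Sum>a\<in>A. c a * (exp_freq a h - exp_freq a0 h) * exp_freq a x)" for x
    using insert.hyps
    by (simp add: g_def exp_freq_add sum_distrib_left sum_subtractf[symmetric] algebra_simps)
  ultimately have "\<forall>a\<in>A. c a * (exp_freq a h - exp_freq a0 h) = 0"
    by (intro insert.IH) simp
  then have coeffs_A: "\<forall>a\<in>A. c a = 0" using separated by auto
  then have "g x = c a0 * exp_freq a0 x" for x using insert.hyps by (simp add: g_def)
  then have "((\<lambda>x::real. norm (c a0)) \<longlongrightarrow> 0) at_top"
    using tendsto_norm[OF g] by (simp add: norm_mult)
  then show ?case using coeffs_A by (simp add: tendsto_const_iff)
qed

lemma continuous_AE_zero_imp_zero:
  fixes F :: "real \<Rightarrow> 'a::{t2_space, zero}"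
  assumes "continuous_on UNIV F" and "AE x in lborel. F x = 0"
  shows "F x = 0"
proof (rule ccontr)
  assume "F x \<noteq> 0"
  moreover have "open {x. F x \<noteq> 0}"
    by (rule open_Collect_neq[OF assms(1) continuous_on_const])
  ultimately obtain e where "e > 0" and e: "ball x e \<subseteq> {x. F x \<noteq> 0}"
    unfolding open_contains_ball by blast
  from assms(2) obtain N where
    N: "{x \<in> space lborel. F x \<noteq> 0} \<subseteq> N" "emeasure lborel N = 0" "N \<in> sets lborel"
    by (rule AE_E) auto
  have "{x - e<..<x + e} \<subseteq> N"
    using e N(1) unfolding ball_eq_greaterThanLessThan by auto
  then have "emeasure lborel {x - e<..<x + e} \<le> emeasure lborel N"
    using N(3) by (rule emeasure_mono)
  then show False using N(2) \<open>e > 0\<close> by simp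
qed

lemma MT_div_shift_tendsto_0:
  fixes f :: "real \<Rightarrow> complex"
  assumes decay: "\<And>d. d > 0 \<Longrightarrow> ((\<lambda>x. f (x + d) / f x) \<longlongrightarrow> 0) at_top"
    and "b' < b"
  shows "((\<lambda>x. c * MT a b' f x / f (x - b)) \<longlongrightarrow> 0) at_top"
proof -
  define d where "d = b - b'"
  have "d > 0" using \<open>b' < b\<close> by (simp add: d_def)
  have "filterlim (\<lambda>x::real. x - b) at_top at_top" by real_asymp
  then have "((\<lambda>x. f (x - b + d) / f (x - b)) \<longlongrightarrow> 0) at_top"
    by (rule filterlim_compose[OF decay[OF \<open>d > 0\<close>]])
  then have "((\<lambda>x. norm c * norm (f (x - b + d) / f (x - b))) \<longlongrightarrow> 0) at_top"
    by (intro tendsto_mult_right_zero tendsto_norm_zero)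
  moreover have "norm (c * MT a b' f x / f (x - b)) = norm c * norm (f (x - b + d) / f (x - b))" for x
    by (simp add: d_def MT_eq_exp_freq norm_mult norm_divide)
  ultimately have "((\<lambda>x. norm (c * MT a b' f x / f (x - b))) \<longlongrightarrow> 0) at_top"
    by simp
  then show ?thesis by (rule tendsto_norm_zero_iff[THEN iffD1])
qed

lemma gabor_sum_top_shift_coeff_zero:
  fixes f :: "real \<Rightarrow> complex"
  assumes nonzero: "eventually (\<lambda>x. f x \<noteq> 0) at_top"
    and decay: "\<And>d. d > 0 \<Longrightarrow> ((\<lambda>x. f (x + d) / f x) \<longlongrightarrow> 0) at_top"
    and "finite S" and zero: "\<And>x. (\<Sum>(a, b)\<in>S. c (a, b) * MT a b f x) = 0"
    and top: "\<And>i. i \<in> S \<Longrightarrow> snd i \<le> b"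
    and "(a, b) \<in> S"
  shows "c (a, b) = 0"
proof -
  define A where "A = {a. (a, b) \<in> S}"
  define R where "R = {i \<in> S. snd i < b}"
  define g where "g = (\<lambda>x. \<Sum>a\<in>A. c (a, b) * exp_freq a x)"
  define T where "T = (\<lambda>i x. c i * MT (fst i) (snd i) f x / f (x - b))"
  have "finite A"
    using finite_imageI[OF \<open>finite S\<close>, of fst] by (rule finite_subset[rotated]) (force simp: A_def)
  have "finite R" using \<open>finite S\<close> by (simp add: R_def)
  have S_split: "S = (\<lambda>a. (a, b)) ` A \<union> R"
    using top by (force simp: A_def R_def order.order_iff_strict)
  have split: "g x * f (x - b) + (\<Sum>i\<in>R. c i * MT (fst i) (snd i) f x) = 0" for x
  proof -
    have "(\<Sum>i\<in>S. c i * MT (fst i) (snd i) f x) =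
        (\<Sum>a\<in>A. c (a, b) * MT a b f x) + (\<Sum>i\<in>R. c i * MT (fst i) (snd i) f x)"
      unfolding S_split using \<open>finite A\<close> \<open>finite R\<close>
      by (subst sum.union_disjoint) (auto simp: R_def sum.reindex inj_on_def)
    then show ?thesis
      using zero[of x] by (simp add: split_beta g_def MT_eq_exp_freq sum_distrib_right mult.assoc)
  qed
  from nonzero obtain X where X: "\<And>x. x \<ge> X \<Longrightarrow> f x \<noteq> 0"
    by (auto simp: eventually_at_top_linorder)
  have "eventually (\<lambda>x. f (x - b) \<noteq> 0) at_top"
    using eventually_ge_at_top[of "X + b"] by eventually_elim (simp add: X)
  then have "eventually (\<lambda>x. - (\<Sum>i\<in>R. T i x) = g x) at_top"
  proof eventually_elim
    case (elim x)
    have "g x * f (x - b) = - (\<Sum>i\<in>R. c i * MT (fst i) (snd i) f x)"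
      using split[of x] by (simp add: add_eq_0_iff)
    then have "g x = - (\<Sum>i\<in>R. c i * MT (fst i) (snd i) f x) / f (x - b)"
      using elim by (metis nonzero_mult_div_cancel_right)
    then show ?case by (simp add: T_def sum_divide_distrib[symmetric])
  qed
  moreover have "(T i \<longlongrightarrow> 0) at_top" if "i \<in> R" for i
    unfolding T_def using that by (intro MT_div_shift_tendsto_0[OF decay]) (auto simp: R_def)
  then have "((\<lambda>x. - (\<Sum>i\<in>R. T i x)) \<longlongrightarrow> 0) at_top"
    using tendsto_minus[OF tendsto_null_sum[of R "\<lambda>x i. T i x"]] by simp
  ultimately have "(g \<longlongrightarrow> 0) at_top"
    by (rule Lim_transform_eventually[rotated])
  then have "\<forall>a'\<in>A. c (a', b) = 0"
    unfolding g_def by (rule trig_poly_tendsto_0_imp_coeffs_0[OF \<open>finite A\<close>])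
  then show ?thesis using \<open>(a, b) \<in> S\<close> by (simp add: A_def)
qed

lemma gabor_lin_indep_if_shift_ratio_tendsto_0:
  fixes f :: "real \<Rightarrow> complex"
  assumes "continuous_on UNIV f"
    and nonzero: "eventually (\<lambda>x. f x \<noteq> 0) at_top"
    and decay: "\<And>d. d > 0 \<Longrightarrow> ((\<lambda>x. f (x + d) / f x) \<longlongrightarrow> 0) at_top"
  shows "gabor_lin_indep f"
  unfolding gabor_lin_indep_def
proof (intro allI impI ballI)
  fix S :: "(real \<times> real) set" and c and ab
  assume "finite S" and "AE x in lborel. (\<Sum>(a, b)\<in>S. c (a, b) * MT a b f x) = 0"
    and "ab \<in> S"
  moreover have "continuous_on UNIV (\<lambda>x. (\<Sum>(a, b)\<in>S. c (a, b) * MT a b f x))"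
    unfolding MT_eq_exp_freq split_beta
    by (intro continuous_intros continuous_on_compose2[OF assms(1)]) auto
  ultimately have zero: "(\<Sum>(a, b)\<in>S. c (a, b) * MT a b f x) = 0" for x
    using continuous_AE_zero_imp_zero by blast
  show "c ab = 0"
  proof (rule ccontr)
    assume "c ab \<noteq> 0"
    define S' where "S' = {i \<in> S. c i \<noteq> 0}"
    have "finite S'" using \<open>finite S\<close> by (simp add: S'_def)
    have "ab \<in> S'" using \<open>ab \<in> S\<close> \<open>c ab \<noteq> 0\<close> by (simp add: S'_def)
    define b where "b = Max (snd ` S')"
    have "b \<in> snd ` S'"
      unfolding b_def using \<open>finite S'\<close> \<open>ab \<in> S'\<close> by (intro Max_in) auto
    then obtain a where "(a, b) \<in> S'" by force
    have "c (a, b) = 0"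
    proof (rule gabor_sum_top_shift_coeff_zero[OF nonzero decay \<open>finite S'\<close>])
      have "(\<Sum>(a, b)\<in>S'. c (a, b) * MT a b f x) = (\<Sum>(a, b)\<in>S. c (a, b) * MT a b f x)" for x
        using \<open>finite S\<close> by (intro sum.mono_neutral_left) (auto simp: S'_def)
      then show "(\<Sum>(a, b)\<in>S'. c (a, b) * MT a b f x) = 0" for x
        using zero by simp
      show "snd i \<le> b" if "i \<in> S'" for i
        using that \<open>finite S'\<close> by (simp add: b_def)
    qed (use \<open>(a, b) \<in> S'\<close> in auto)
    then show False using \<open>(a, b) \<in> S'\<close> by (simp add: S'_def)
  qed
qed

lemma poly_norm_le_power:
  fixes p :: "'a::real_normed_field poly"
  obtains M n where "\<And>z. norm (poly p z) \<le> M * (1 + norm z) ^ n"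
proof -
  have "\<exists>M n. \<forall>z. norm (poly p z) \<le> M * (1 + norm z) ^ n"
  proof (induction p)
    case 0
    then show ?case by (intro exI[of _ 0]) auto
  next
    case (pCons a q)
    then obtain M n where M: "\<And>z. norm (poly q z) \<le> M * (1 + norm z) ^ n" by blast
    have "norm (poly (pCons a q) z) \<le> (norm a + M) * (1 + norm z) ^ Suc n" for z
    proof -
      have "M \<ge> 0" using M[of 0] order_trans[OF norm_ge_zero] by (simp add: zero_le_mult_iff)
      have "1 \<le> (1 + norm z) ^ Suc n" by (rule one_le_power) simp
      have "norm (poly (pCons a q) z) \<le> norm a + norm z * norm (poly q z)"
        by (simp add: norm_triangle_ineq[THEN order_trans] norm_mult)
      also have "\<dots> \<le> norm a * 1 + (1 + norm z) * (M * (1 + norm z) ^ n)"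
        using M[of z] by (intro add_mono mult_mono) auto
      also have "\<dots> \<le> norm a * (1 + norm z) ^ Suc n + M * (1 + norm z) ^ Suc n"
        using \<open>1 \<le> (1 + norm z) ^ Suc n\<close> by (intro add_mono mult_left_mono) (auto simp: mult_ac)
      finally show ?thesis by (simp add: algebra_simps)
    qed
    then show ?case by blast
  qed
  then show thesis using that by blast
qed

lemma poly_norm_bounded_below_at_infinity:
  fixes p :: "'a::{real_normed_div_algebra, comm_ring_1} poly"
  assumes "p \<noteq> 0"
  obtains \<delta> R where "\<delta> > 0" and "\<And>z. R \<le> norm z \<Longrightarrow> \<delta> \<le> norm (poly p z)"
proof (cases "degree p = 0")
  case True
  then have "\<And>z. poly p z = coeff p 0" by (subst degree_0_id[OF True, symmetric]) simp
  moreover have "coeff p 0 \<noteq> 0" using assms degree_0_id[OF True] by force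
  ultimately show thesis by (intro that[of "norm (coeff p 0)"]) auto
next
  case False
  then obtain a q where "p = pCons a q" "q \<noteq> 0"
    by (metis degree_pCons_0 pCons_cases)
  with poly_infinity[of q 1 a] obtain R where "\<And>z. R \<le> norm z \<Longrightarrow> 1 \<le> norm (poly p z)"
    by auto
  then show thesis by (intro that[of 1 R]) auto
qed

lemma powr_one_plus_add_ge:
  fixes y d e :: real
  assumes "y \<ge> 0" "d \<ge> 0" "e > 0"
  shows "(y + d) powr (1 + e) \<ge> y powr (1 + e) + d * y powr e"
proof -
  have "y powr (1 + e) + d * y powr e = (y + d) * y powr e"
    using assms by (simp add: powr_add algebra_simps)
  also have "\<dots> \<le> (y + d) * (y + d) powr e"
    using assms by (intro mult_left_mono powr_mono2) auto
  also have "\<dots> = (y + d) powr (1 + e)"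
    using assms by (simp add: powr_add)
  finally show ?thesis .
qed

lemma poly_exp_shift_ratio_tendsto_0:
  fixes p :: "complex poly"
  assumes "p \<noteq> 0" "\<epsilon> > 0" "d > 0"
  shows "((\<lambda>x. (poly p (of_real (x + d)) * of_real (exp (- (\<bar>x + d\<bar> powr (1 + \<epsilon>))))) /
                (poly p (of_real x) * of_real (exp (- (\<bar>x\<bar> powr (1 + \<epsilon>)))))) \<longlongrightarrow> 0) at_top"
    (is "(?ratio \<longlongrightarrow> 0) at_top")
proof -
  obtain M n where M: "\<And>z. norm (poly p z) \<le> M * (1 + norm z) ^ n"
    using poly_norm_le_power by blast
  obtain \<delta> R where "\<delta> > 0" and \<delta>: "\<And>z. R \<le> norm z \<Longrightarrow> \<delta> \<le> norm (poly p z)"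
    using poly_norm_bounded_below_at_infinity[OF assms(1)] by blast
  define bound where "bound = (\<lambda>x. M / \<delta> * ((1 + x + d) ^ n * exp (- d * x powr \<epsilon>)))"
  have "eventually (\<lambda>x. norm (?ratio x) \<le> bound x) at_top"
    using eventually_ge_at_top[of "max R 0"]
  proof eventually_elim
    case (elim x)
    then have "x \<ge> 0" "x \<ge> R" by auto
    have num: "norm (poly p (of_real (x + d))) \<le> M * (1 + x + d) ^ n"
      using M[of "of_real (x + d)"] \<open>x \<ge> 0\<close> \<open>d > 0\<close> by (simp del: of_real_add add: add.assoc)
    have den: "\<delta> \<le> norm (poly p (of_real x))"
      using \<delta>[of "of_real x"] \<open>x \<ge> 0\<close> \<open>x \<ge> R\<close> by simp
    have "(x + d) powr (1 + \<epsilon>) \<ge> x powr (1 + \<epsilon>) + d * x powr \<epsilon>"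
      using powr_one_plus_add_ge[of x d \<epsilon>] \<open>x \<ge> 0\<close> assms by simp
    then have exps: "exp (- ((x + d) powr (1 + \<epsilon>))) / exp (- (x powr (1 + \<epsilon>))) \<le> exp (- d * x powr \<epsilon>)"
      by (simp add: exp_diff[symmetric])
    have "norm (?ratio x) = norm (poly p (of_real (x + d))) / norm (poly p (of_real x)) *
        (exp (- ((x + d) powr (1 + \<epsilon>))) / exp (- (x powr (1 + \<epsilon>))))"
      using \<open>x \<ge> 0\<close> \<open>d > 0\<close> by (simp add: norm_mult norm_divide)
    also have "\<dots> \<le> (M * (1 + x + d) ^ n / \<delta>) * exp (- d * x powr \<epsilon>)"
      using num den \<open>\<delta> > 0\<close> exps order_trans[OF norm_ge_zero num]
      by (intro mult_mono frac_le) auto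
    finally show ?case by (simp add: bound_def)
  qed
  moreover have "(bound \<longlongrightarrow> 0) at_top"
    unfolding bound_def using assms by (intro tendsto_mult_right_zero) real_asymp
  ultimately show ?thesis by (rule Lim_null_comparison)
qed

lemma poly_exp_eventually_nonzero:
  fixes p :: "complex poly"
  assumes "p \<noteq> 0"
  shows "eventually (\<lambda>x. poly p (of_real x) * of_real (exp (- (\<bar>x\<bar> powr (1 + \<epsilon>)))) \<noteq> 0) at_top"
proof -
  obtain \<delta> R where "\<delta> > 0" and \<delta>: "\<And>z. R \<le> norm z \<Longrightarrow> \<delta> \<le> norm (poly p z)"
    using poly_norm_bounded_below_at_infinity[OF assms] by blast
  show ?thesis
    using eventually_ge_at_top[of "max R 0"]
  proof eventually_elim
    case (elim x)
    then have "\<delta> \<le> norm (poly p (of_real x))" using \<delta>[of "of_real x"] by simp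
    then show ?case using \<open>\<delta> > 0\<close> by auto
  qed
qed

theorem corollary3p6:
  fixes p :: "complex poly" and \<epsilon> :: real
  assumes "p \<noteq> 0" and "\<epsilon> > 0"
  shows "gabor_lin_indep (\<lambda>x. poly p (complex_of_real x) *
                                 complex_of_real (exp (- (\<bar>x\<bar> powr (1 + \<epsilon>)))))"
proof (rule gabor_lin_indep_if_shift_ratio_tendsto_0)
  show "continuous_on UNIV (\<lambda>x. poly p (complex_of_real x) *
                                 complex_of_real (exp (- (\<bar>x\<bar> powr (1 + \<epsilon>)))))"
    using \<open>\<epsilon> > 0\<close> by (intro continuous_intros continuous_on_powr') auto
qed (rule poly_exp_eventually_nonzero[OF assms(1)] poly_exp_shift_ratio_tendsto_0[OF assms])+

end
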